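(* In the upper half-space model $\mathbb{H}^3=\{x_3>0\}$ with metric $\frac{1}{x_3^2}(dx_1^2+dx_2^2+dx_3^2)$, let $E$ be a complete end of revolution about the $x_3$-axis with profile curve $\gamma:[0,\infty)\to\mathbb{H}^3$, $\gamma(s)=(\gamma_1(s),0,\gamma_2(s))$, parametrized by hyperbolic arc length, $\gamma_1>0$. If $E$ is non-parabolic, then $\sup_{s\in[0,\infty)}\gamma_1(s)<\infty$.
   Context: $E=\{(\gamma_1(s)\cos\theta,\gamma_1(s)\sin\theta,\gamma_2(s)): s\ge0,\theta\in[0,2\pi)\}$ with the induced metric; arc length parametrization means $(\dot\gamma_1^2+\dot\gamma_2^2)/\gamma_2^2=1$. An end is parabolic if every bounded harmonic function on it is determined by its boundary values. *)

theory Defs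
  imports "HOL-Analysis.Analysis"
begin

text \<open>Coordinates on the end of revolution E: (s, theta), s \<ge> 0 hyperbolic arc length
  along the profile curve, theta the rotation angle (functions are 2pi-periodic in theta).
  The induced metric is ds^2 + rho(s)^2 dtheta^2 with rho = gamma1 / gamma2.\<close>

definition ps :: "(real \<Rightarrow> real \<Rightarrow> real) \<Rightarrow> real \<Rightarrow> real \<Rightarrow> real" where
  "ps u = (\<lambda>s t. deriv (\<lambda>x. u x t) s)"

definition pt :: "(real \<Rightarrow> real \<Rightarrow> real) \<Rightarrow> real \<Rightarrow> real \<Rightarrow> real" where
  "pt u = (\<lambda>s t. deriv (\<lambda>y. u s y) t)"

definition C2_on :: "(real \<times> real) set \<Rightarrow> (real \<Rightarrow> real \<Rightarrow> real) \<Rightarrow> bool" where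
  "C2_on S u \<longleftrightarrow>
     (\<forall>g\<in>{u, ps u, pt u}. \<forall>(s,t)\<in>S.
        (\<lambda>x. g x t) differentiable (at s) \<and> (\<lambda>y. g s y) differentiable (at t)) \<and>
     (\<forall>g\<in>{u, ps u, pt u, ps (ps u), ps (pt u), pt (ps u), pt (pt u)}.
        continuous_on S (\<lambda>(s,t). g s t))"

text \<open>Laplace--Beltrami operator of the metric ds^2 + rho^2 dtheta^2.\<close>
definition laplacian_rev :: "(real \<Rightarrow> real) \<Rightarrow> (real \<Rightarrow> real \<Rightarrow> real) \<Rightarrow> real \<Rightarrow> real \<Rightarrow> real" where
  "laplacian_rev \<rho> u s t =
     deriv (\<lambda>x. \<rho> x * ps u x t) s / \<rho> s + pt (pt u) s t / (\<rho> s)^2"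

definition bounded_harmonic_on_end :: "(real \<Rightarrow> real) \<Rightarrow> (real \<Rightarrow> real \<Rightarrow> real) \<Rightarrow> bool" where
  "bounded_harmonic_on_end \<rho> u \<longleftrightarrow>
     (\<forall>s t. u s (t + 2 * pi) = u s t) \<and>
     continuous_on ({0..} \<times> UNIV) (\<lambda>(s,t). u s t) \<and>
     C2_on ({0<..} \<times> UNIV) u \<and>
     (\<forall>s>0. \<forall>t. laplacian_rev \<rho> u s t = 0) \<and>
     bounded ((\<lambda>(s,t). u s t) ` ({0..} \<times> UNIV))"

definition parabolic_end :: "(real \<Rightarrow> real) \<Rightarrow> bool" where
  "parabolic_end \<rho> \<longleftrightarrow>
     (\<forall>u v. bounded_harmonic_on_end \<rho> u \<longrightarrow> bounded_harmonic_on_end \<rho> v \<longrightarrow>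
        (\<forall>t. u 0 t = v 0 t) \<longrightarrow> (\<forall>s\<ge>0. \<forall>t. u s t = v s t))"

end

theory Submission
  imports Defs
begin

text \<open>Write \<open>\<rho> = \<gamma>1 / \<gamma>2\<close>, so that the end carries the metric \<open>ds\<^sup>2 + \<rho>\<^sup>2 d\<theta>\<^sup>2\<close>.
  Arc length gives \<open>\<gamma>1' \<le> \<gamma>2\<close>, hence \<open>(ln \<gamma>1)' \<le> 1 / \<rho>\<close>: if \<open>\<gamma>1\<close> is unbounded, so is
  \<open>H(s) = \<integral>\<^sub>0\<^sup>s 1/\<rho>\<close>. This forces parabolicity. \<open>H\<close> is harmonic, and
  \<open>G(s) = \<integral>\<^sub>0\<^sup>s P/\<rho>\<close> with \<open>P(s) = \<integral>\<^sub>0\<^sup>s \<rho>\<close> has Laplacian 1. If the bounded harmonic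
  functions \<open>u \<le> v\<close> on the boundary circle had \<open>u - v = \<eta> > 0\<close> somewhere, then for small \<open>\<epsilon>\<close>
  and a far circle \<open>s = R\<close> on which \<open>\<epsilon> H\<close> exceeds the bounds of \<open>u, v\<close>, and then small \<open>\<delta>\<close>,
  the strictly subharmonic function \<open>u - v - \<epsilon> H + \<delta> G\<close> would attain a positive interior
  maximum on the annulus \<open>0 \<le> s \<le> R\<close>, which the second-order conditions exclude.\<close>

lemma periodic_shift_int:
  fixes f :: "real \<Rightarrow> 'a"
  assumes per: "\<And>t. f (t + p) = f t"
  shows "f (t + of_int n * p) = f t"
proof (induction n rule: int_induct[where k = 0])
  case base
  then show ?case by simp
next
  case (step1 i)
  have "f (t + of_int (i + 1) * p) = f ((t + of_int i * p) + p)"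
    by (simp add: algebra_simps)
  then show ?case using per step1 by simp
next
  case (step2 i)
  have "f (t + of_int i * p) = f ((t + of_int (i - 1) * p) + p)"
    by (simp add: algebra_simps)
  then show ?case using per step2 by simp
qed

lemma periodic_representative:
  fixes f :: "real \<Rightarrow> 'a"
  assumes "p > 0" and per: "\<And>t. f (t + p) = f t"
  shows "\<exists>t'\<in>{0..p}. f t' = f t"
proof -
  define n where "n = \<lfloor>t / p\<rfloor>"
  define t' where "t' = t - of_int n * p"
  have "f t' = f t"
    using periodic_shift_int[of f p t' n] per by (simp add: t'_def)
  moreover have "of_int n \<le> t / p" "t / p < of_int n + 1"
    unfolding n_def by linarith+
  then have "t' \<in> {0..p}"
    using \<open>p > 0\<close> by (auto simp: t'_def field_simps)
  ultimately show ?thesis by blast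
qed

lemma periodic_attains_max_on_strip:
  fixes F :: "real \<Rightarrow> real \<Rightarrow> real"
  assumes "a \<le> b" and "p > 0"
    and cont: "continuous_on ({a..b} \<times> {0..p}) (\<lambda>(s, t). F s t)"
    and per: "\<And>s t. F s (t + p) = F s t"
  obtains s0 t0 where "s0 \<in> {a..b}" and "\<And>s t. s \<in> {a..b} \<Longrightarrow> F s t \<le> F s0 t0"
proof -
  have "compact ({a..b} \<times> {0..p})" "{a..b} \<times> {0..p} \<noteq> {}"
    using assms by (auto intro: compact_Times)
  then obtain z where z: "z \<in> {a..b} \<times> {0..p}"
    and zmax: "\<And>y. y \<in> {a..b} \<times> {0..p} \<Longrightarrow> (\<lambda>(s, t). F s t) y \<le> (\<lambda>(s, t). F s t) z"
    using continuous_attains_sup[OF _ _ cont] by blast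
  obtain s0 t0 where z_eq: "z = (s0, t0)" by (cases z)
  show ?thesis
  proof (rule that)
    show "s0 \<in> {a..b}" using z z_eq by auto
    fix s t assume s: "s \<in> {a..b}"
    obtain t' where "t' \<in> {0..p}" "F s t' = F s t"
      using periodic_representative[of p "F s"] \<open>p > 0\<close> per by blast
    then show "F s t \<le> F s0 t0"
      using zmax[of "(s, t')"] s z_eq by auto
  qed
qed

lemma DERIV_rises_after_upcrossing:
  fixes f f' k g :: "real \<Rightarrow> real"
  assumes "e > 0"
    and f': "\<And>x. x \<in> {a..<a + e} \<Longrightarrow> (f has_real_derivative f' x) (at x)"
    and k: "\<And>x. x \<in> {a..<a + e} \<Longrightarrow> k x > 0 \<and> g x = k x * f' x"
    and g': "(g has_real_derivative c) (at a)" and "c > 0" and "g a = 0"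
  shows "\<exists>b. a < b \<and> b < a + e \<and> f a < f b"
proof -
  obtain d where "d > 0" and d: "\<And>h. 0 < h \<Longrightarrow> h < d \<Longrightarrow> g a < g (a + h)"
    using DERIV_pos_inc_right[OF g' \<open>c > 0\<close>] by blast
  define b where "b = a + min d e / 2"
  have ab: "a < b" "b < a + e" using \<open>d > 0\<close> \<open>e > 0\<close> unfolding b_def by auto
  have "continuous_on {a..b} f"
    using ab by (intro DERIV_atLeastAtMost_imp_continuous_on) (fastforce intro: f')
  then have "f a < f b"
  proof (rule DERIV_pos_imp_increasing_open[OF ab(1), rotated])
    fix x assume x: "a < x" "x < b"
    then have "g x > 0"
      using d[of "x - a"] \<open>g a = 0\<close> unfolding b_def by auto
    then have "f' x > 0"
      using k[of x] x ab by (auto simp: zero_less_mult_iff)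
    then show "\<exists>y. (f has_real_derivative y) (at x) \<and> y > 0"
      using f'[of x] x ab by auto
  qed
  then show ?thesis using ab by blast
qed

lemma DERIV_second_nonpos_at_max:
  fixes \<phi> \<phi>' :: "real \<Rightarrow> real"
  assumes \<phi>': "\<And>y. (\<phi> has_real_derivative \<phi>' y) (at y)"
    and \<phi>'': "(\<phi>' has_real_derivative c) (at t0)"
    and max: "\<And>y. \<phi> y \<le> \<phi> t0"
  shows "c \<le> 0"
proof (rule ccontr)
  assume "\<not> c \<le> 0"
  have "\<phi>' t0 = 0"
    using DERIV_local_max[OF \<phi>', of 1] max by auto
  then obtain b where "\<phi> t0 < \<phi> b"
    using DERIV_rises_after_upcrossing[of 1 t0 \<phi> \<phi>' "\<lambda>_. 1" \<phi>' c] \<phi>' \<phi>'' \<open>\<not> c \<le> 0\<close>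
    by auto
  then show False using max[of b] by simp
qed

lemma C2_on_partials:
  assumes "C2_on S u" and "(s, t) \<in> S"
  shows "((\<lambda>x. u x t) has_real_derivative ps u s t) (at s)"
    and "((\<lambda>y. u s y) has_real_derivative pt u s t) (at t)"
    and "((\<lambda>y. pt u s y) has_real_derivative pt (pt u) s t) (at t)"
    and "(\<lambda>x. ps u x t) differentiable (at s)"
  using assms unfolding C2_on_def ps_def pt_def
  by (auto simp: DERIV_deriv_iff_real_differentiable)

lemma pt_pt_diff_nonpos_at_max:
  assumes u: "C2_on ({0<..} \<times> UNIV) u" and v: "C2_on ({0<..} \<times> UNIV) v" and "s > 0"
    and max: "\<And>y. u s y - v s y \<le> u s t - v s t"
  shows "pt (pt u) s t - pt (pt v) s t \<le> 0"
proof (rule DERIV_second_nonpos_at_max)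
  have st: "(s, y) \<in> {0<..} \<times> UNIV" for y using \<open>s > 0\<close> by simp
  show "((\<lambda>y. u s y - v s y) has_real_derivative pt u s y - pt v s y) (at y)" for y
    by (intro DERIV_diff C2_on_partials(2)[OF u st] C2_on_partials(2)[OF v st])
  show "((\<lambda>y. pt u s y - pt v s y) has_real_derivative pt (pt u) s t - pt (pt v) s t) (at t)"
    by (intro DERIV_diff C2_on_partials(3)[OF u st] C2_on_partials(3)[OF v st])
qed (fact max)

lemma bounded_harmonic_on_end_bound:
  assumes "bounded_harmonic_on_end \<rho> u"
  obtains M where "\<And>s t. s \<ge> 0 \<Longrightarrow> \<bar>u s t\<bar> \<le> M"
proof -
  obtain M where "\<forall>x\<in>(\<lambda>(s, t). u s t) ` ({0..} \<times> UNIV). norm x \<le> M"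
    using assms unfolding bounded_harmonic_on_end_def bounded_iff by blast
  then have "\<bar>u s t\<bar> \<le> M" if "s \<ge> 0" for s t
    using that by force
  then show ?thesis by (rule that)
qed

lemma DERIV_integral_from_0:
  fixes f :: "real \<Rightarrow> real"
  assumes "continuous_on {0..} f" and "s > 0"
  shows "((\<lambda>s. integral {0..s} f) has_real_derivative f s) (at s)"
proof -
  have "((\<lambda>s. integral {0..s} f) has_real_derivative f s) (at s within {0..s + 1})"
    using assms by (intro integral_has_real_derivative continuous_on_subset[OF assms(1)]) auto
  moreover have "at s within {0..s + 1} = at s"
    using assms by (intro at_within_interior) auto
  ultimately show ?thesis by simp
qed

lemma continuous_on_integral_from_0:
  fixes f :: "real \<Rightarrow> real"
  assumes "continuous_on {0..} f"
  shows "continuous_on {0..} (\<lambda>s. integral {0..s} f)"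
proof (rule DERIV_continuous_on)
  fix s :: real assume "s \<in> {0..}"
  have "((\<lambda>s. integral {0..s} f) has_real_derivative f s) (at s within {0..s + 1})"
    using \<open>s \<in> {0..}\<close> by (intro integral_has_real_derivative continuous_on_subset[OF assms]) auto
  moreover have "at s within {0..} = at s within {0..s + 1}"
    by (rule at_within_nhd[of _ "{..<s + 1}"]) auto
  ultimately show "((\<lambda>s. integral {0..s} f) has_real_derivative f s) (at s within {0..})"
    by simp
qed

lemma integral_from_0_mono:
  fixes f :: "real \<Rightarrow> real"
  assumes "continuous_on {0..} f" and "\<And>x. x \<ge> 0 \<Longrightarrow> f x \<ge> 0"
    and "0 \<le> s" and "s \<le> r"
  shows "integral {0..s} f \<le> integral {0..r} f"
  using assms
  by (intro integral_subset_le integrable_continuous_real continuous_on_subset[OF assms(1)]) auto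

locale end_barriers =
  fixes \<rho> H P G :: "real \<Rightarrow> real"
  assumes pos: "\<And>s. s \<ge> 0 \<Longrightarrow> \<rho> s > 0"
    and differentiable: "\<And>s. s > 0 \<Longrightarrow> \<rho> differentiable (at s)"
    and H': "\<And>s. s > 0 \<Longrightarrow> (H has_real_derivative 1 / \<rho> s) (at s)"
    and P': "\<And>s. s > 0 \<Longrightarrow> (P has_real_derivative \<rho> s) (at s)"
    and G': "\<And>s. s > 0 \<Longrightarrow> (G has_real_derivative P s / \<rho> s) (at s)"
    and continuous_H: "continuous_on {0..} H" and continuous_G: "continuous_on {0..} G"
    and H_0: "H 0 = 0" and G_0: "G 0 = 0"
    and mono_H: "\<And>s r. 0 \<le> s \<Longrightarrow> s \<le> r \<Longrightarrow> H s \<le> H r"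
    and mono_G: "\<And>s r. 0 \<le> s \<Longrightarrow> s \<le> r \<Longrightarrow> G s \<le> G r"
begin

lemma no_interior_max:
  fixes u v :: "real \<Rightarrow> real \<Rightarrow> real"
  assumes u: "C2_on ({0<..} \<times> UNIV) u" "\<And>s t. s > 0 \<Longrightarrow> laplacian_rev \<rho> u s t = 0"
    and v: "C2_on ({0<..} \<times> UNIV) v" "\<And>s t. s > 0 \<Longrightarrow> laplacian_rev \<rho> v s t = 0"
    and "\<delta> > 0" and "0 < s0" and "s0 < R"
    and max: "\<And>s t. s \<in> {0..R} \<Longrightarrow>
      u s t - v s t - \<epsilon> * H s + \<delta> * G s \<le> u s0 t0 - v s0 t0 - \<epsilon> * H s0 + \<delta> * G s0"
  shows False
proof -
  define F where "F = (\<lambda>s t. u s t - v s t - \<epsilon> * H s + \<delta> * G s)"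
  have s0: "(s0, t0) \<in> {0<..} \<times> UNIV" using \<open>0 < s0\<close> by simp
  have \<rho>_s0: "\<rho> s0 > 0" using pos \<open>0 < s0\<close> by simp
  have angular: "pt (pt u) s0 t0 - pt (pt v) s0 t0 \<le> 0"
    by (rule pt_pt_diff_nonpos_at_max[OF u(1) v(1) \<open>0 < s0\<close>])
      (use max[of s0] \<open>0 < s0\<close> \<open>s0 < R\<close> in simp)
  define F' where "F' = (\<lambda>x. ps u x t0 - ps v x t0 - \<epsilon> * (1 / \<rho> x) + \<delta> * (P x / \<rho> x))"
  have F': "((\<lambda>x. F x t0) has_real_derivative F' x) (at x)" if "x > 0" for x
    unfolding F_def F'_def using that
    by (intro DERIV_add DERIV_diff DERIV_cmult H' G' C2_on_partials(1)[OF u(1)]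
        C2_on_partials(1)[OF v(1)]) auto
  define e where "e = min s0 (R - s0)"
  have "e > 0" using \<open>0 < s0\<close> \<open>s0 < R\<close> by (simp add: e_def)
  have "F' s0 = 0"
    by (rule DERIV_local_max[OF F'[OF \<open>0 < s0\<close>] \<open>e > 0\<close>])
      (auto simp: F_def e_def abs_less_iff intro!: max)
  \<comment> \<open>Only the flux \<open>\<rho> u\<^sub>s\<close> is differentiable in \<open>s\<close>; by the Laplace equations and the
    angular condition, \<open>\<rho> F'\<close> crosses zero upwards at \<open>s0\<close>, so \<open>F\<close> increases past \<open>s0\<close>.\<close>
  define flux where "flux = (\<lambda>x. \<rho> x * ps u x t0 - \<rho> x * ps v x t0 - \<epsilon> + \<delta> * P x)"
  have flux: "\<rho> x > 0 \<and> flux x = \<rho> x * F' x" if "x \<in> {s0..<s0 + (R - s0)}" for x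
    using pos[of x] that \<open>0 < s0\<close> by (auto simp: flux_def F'_def field_simps)
  define Du where "Du = deriv (\<lambda>x. \<rho> x * ps u x t0) s0"
  define Dv where "Dv = deriv (\<lambda>x. \<rho> x * ps v x t0) s0"
  have Du: "((\<lambda>x. \<rho> x * ps u x t0) has_real_derivative Du) (at s0)"
    and Dv: "((\<lambda>x. \<rho> x * ps v x t0) has_real_derivative Dv) (at s0)"
    unfolding Du_def Dv_def DERIV_deriv_iff_real_differentiable
    using differentiable \<open>0 < s0\<close> C2_on_partials(4)[OF u(1) s0] C2_on_partials(4)[OF v(1) s0]
    by (auto intro: differentiable_mult)
  have "Du / \<rho> s0 + pt (pt u) s0 t0 / (\<rho> s0)\<^sup>2 = 0" "Dv / \<rho> s0 + pt (pt v) s0 t0 / (\<rho> s0)\<^sup>2 = 0"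
    using u(2) v(2) \<open>0 < s0\<close> unfolding laplacian_rev_def Du_def Dv_def by auto
  then have "Du - Dv = - (pt (pt u) s0 t0 - pt (pt v) s0 t0) / \<rho> s0"
    using \<rho>_s0 by (simp add: field_simps power2_eq_square)
  then have "Du - Dv \<ge> 0" using angular \<rho>_s0 by simp
  then have flux'_pos: "Du - Dv + \<delta> * \<rho> s0 > 0" using mult_pos_pos[OF \<open>\<delta> > 0\<close> \<rho>_s0] by simp
  have flux': "(flux has_real_derivative Du - Dv + \<delta> * \<rho> s0) (at s0)"
    using DERIV_add[OF DERIV_diff[OF DERIV_diff[OF Du Dv] DERIV_const] DERIV_cmult[OF P'[OF \<open>0 < s0\<close>]]]
    by (simp add: flux_def)
  have "flux s0 = 0" using flux[of s0] \<open>F' s0 = 0\<close> \<open>s0 < R\<close> by simp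
  then obtain b where "s0 < b" "b < R" "F s0 t0 < F b t0"
    using DERIV_rises_after_upcrossing[of "R - s0" s0 "\<lambda>x. F x t0" F' \<rho> flux, OF _ _ _ flux' flux'_pos]
      F' flux \<open>0 < s0\<close> \<open>s0 < R\<close> by auto
  then show False using max[of b t0] \<open>0 < s0\<close> by (simp add: F_def)
qed

lemma barrier_constants:
  assumes H_unbounded: "\<not> bdd_above (H ` {0..})" and "\<eta> > 0" and "s \<ge> 0"
  obtains \<epsilon> \<delta> R where "\<epsilon> > 0" "\<delta> > 0" "s < R"
    "\<epsilon> * H s < \<eta> / 3" "\<epsilon> * H R > M + \<eta>" "\<delta> * G R < \<eta> / 3"
proof -
  have H_nonneg: "H x \<ge> 0" and G_nonneg: "G x \<ge> 0" if "x \<ge> 0" for x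
    using mono_H[of 0 x] mono_G[of 0 x] H_0 G_0 that by auto
  define \<epsilon> where "\<epsilon> = \<eta> / (3 * (H s + 1))"
  have "\<epsilon> > 0" "\<epsilon> * H s < \<eta> / 3"
    using \<open>\<eta> > 0\<close> H_nonneg[OF \<open>s \<ge> 0\<close>] by (auto simp: \<epsilon>_def field_simps)
  obtain s2 where "s2 \<ge> 0" "H s2 > (M + \<eta>) / \<epsilon>"
    using H_unbounded by (auto simp: bdd_above_def not_le)
  define R where "R = max s2 (s + 1)"
  have "s < R" using \<open>s \<ge> 0\<close> by (auto simp: R_def)
  have "H R > (M + \<eta>) / \<epsilon>"
    using mono_H[of s2 R] \<open>s2 \<ge> 0\<close> \<open>H s2 > _\<close> by (simp add: R_def)
  then have "\<epsilon> * H R > M + \<eta>"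
    using \<open>\<epsilon> > 0\<close> by (simp add: pos_divide_less_eq mult.commute)
  define \<delta> where "\<delta> = \<eta> / (3 * (G R + 1))"
  have "\<delta> > 0" "\<delta> * G R < \<eta> / 3"
    using \<open>\<eta> > 0\<close> G_nonneg[of R] \<open>s < R\<close> \<open>s \<ge> 0\<close> by (auto simp: \<delta>_def field_simps)
  show ?thesis by (rule that) fact+
qed

lemma continuous_on_barrier_difference:
  assumes u: "bounded_harmonic_on_end \<rho> u" and v: "bounded_harmonic_on_end \<rho> v"
    and "K \<subseteq> {0..} \<times> UNIV"
  shows "continuous_on K (\<lambda>(s, t). u s t - v s t - \<epsilon> * H s + \<delta> * G s)"
proof -
  have "continuous_on K (\<lambda>z. u (fst z) (snd z))" "continuous_on K (\<lambda>z. v (fst z) (snd z))"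
    using u v \<open>K \<subseteq> _\<close> unfolding bounded_harmonic_on_end_def
    by (auto simp: case_prod_beta elim: continuous_on_subset)
  moreover have "continuous_on K (\<lambda>z. H (fst z))" "continuous_on K (\<lambda>z. G (fst z))"
    using \<open>K \<subseteq> _\<close>
    by (auto intro!: continuous_on_compose2[OF continuous_H continuous_on_fst]
        continuous_on_compose2[OF continuous_G continuous_on_fst] continuous_on_id)
  ultimately show ?thesis
    unfolding case_prod_beta
    by (intro continuous_on_add continuous_on_diff continuous_on_mult continuous_on_const)
qed

lemma bounded_harmonic_le_if_boundary_le:
  assumes H_unbounded: "\<not> bdd_above (H ` {0..})"
    and u: "bounded_harmonic_on_end \<rho> u" and v: "bounded_harmonic_on_end \<rho> v"
    and boundary: "\<And>t. u 0 t \<le> v 0 t"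
    and "s \<ge> 0"
  shows "u s t \<le> v s t"
proof (rule ccontr)
  define \<eta> where "\<eta> = u s t - v s t"
  assume "\<not> u s t \<le> v s t"
  then have "\<eta> > 0" by (simp add: \<eta>_def)
  obtain Mu where Mu: "\<And>s t. s \<ge> 0 \<Longrightarrow> \<bar>u s t\<bar> \<le> Mu"
    using bounded_harmonic_on_end_bound[OF u] by blast
  obtain Mv where Mv: "\<And>s t. s \<ge> 0 \<Longrightarrow> \<bar>v s t\<bar> \<le> Mv"
    using bounded_harmonic_on_end_bound[OF v] by blast
  \<comment> \<open>The barrier \<open>\<epsilon> H - \<delta> G\<close> costs at most \<open>\<eta>/3\<close> at \<open>s\<close> and dominates \<open>u - v\<close> on the circle \<open>R\<close>.\<close>
  obtain \<epsilon> \<delta> R where "\<epsilon> > 0" "\<delta> > 0" "s < R" "\<epsilon> * H s < \<eta> / 3"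
    and \<epsilon>_H_R: "\<epsilon> * H R > Mu + Mv + \<eta>" and "\<delta> * G R < \<eta> / 3"
    using barrier_constants[OF H_unbounded \<open>\<eta> > 0\<close> \<open>s \<ge> 0\<close>] by blast
  have "0 < R" using \<open>s \<ge> 0\<close> \<open>s < R\<close> by simp
  define F where "F = (\<lambda>s t. u s t - v s t - \<epsilon> * H s + \<delta> * G s)"
  have "continuous_on ({0..R} \<times> {0..2 * pi}) (\<lambda>(s, t). F s t)"
    unfolding F_def by (rule continuous_on_barrier_difference[OF u v]) auto
  moreover have "F s (t + 2 * pi) = F s t" for s t
    using u v unfolding F_def bounded_harmonic_on_end_def by simp
  ultimately obtain s0 t0 where "s0 \<in> {0..R}" and max: "\<And>s t. s \<in> {0..R} \<Longrightarrow> F s t \<le> F s0 t0"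
    by (rule periodic_attains_max_on_strip[rotated 2]) (use \<open>0 < R\<close> in auto)
  have "\<delta> * G s \<ge> 0"
    using \<open>\<delta> > 0\<close> mono_G[of 0 s] G_0 \<open>s \<ge> 0\<close> by simp
  then have "F s t > 0"
    using \<open>\<epsilon> * H s < \<eta> / 3\<close> \<open>\<eta> > 0\<close> by (simp add: F_def \<eta>_def)
  then have "F s0 t0 > 0" using max[of s t] \<open>s \<ge> 0\<close> \<open>s < R\<close> by simp
  moreover have "F 0 t0 \<le> 0"
    using boundary[of t0] by (simp add: F_def H_0 G_0)
  moreover have "F R t0 < 0"
    using Mu[of R t0] Mv[of R t0] \<open>0 < R\<close> \<epsilon>_H_R \<open>\<delta> * G R < \<eta> / 3\<close> \<open>\<eta> > 0\<close>
    unfolding F_def abs_le_iff by linarith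
  ultimately have "0 < s0" "s0 < R"
    using \<open>s0 \<in> {0..R}\<close> by (auto simp: less_eq_real_def)
  then show False
    using no_interior_max[of u v \<delta> s0 R \<epsilon> t0] max u v \<open>\<delta> > 0\<close>
    by (auto simp: F_def bounded_harmonic_on_end_def)
qed

end

theorem parabolic_end_if_unbounded_integral_inverse:
  fixes \<rho> :: "real \<Rightarrow> real"
  assumes pos: "\<And>s. s \<ge> 0 \<Longrightarrow> \<rho> s > 0" and cont: "continuous_on {0..} \<rho>"
    and diff: "\<And>s. s > 0 \<Longrightarrow> \<rho> differentiable (at s)"
    and unbounded: "\<not> bdd_above ((\<lambda>s. integral {0..s} (\<lambda>x. 1 / \<rho> x)) ` {0..})"
  shows "parabolic_end \<rho>"
proof -
  define H where "H = (\<lambda>s. integral {0..s} (\<lambda>x. 1 / \<rho> x))"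
  define P where "P = (\<lambda>s. integral {0..s} \<rho>)"
  define G where "G = (\<lambda>s. integral {0..s} (\<lambda>x. P x / \<rho> x))"
  have \<rho>_ne: "\<rho> x \<noteq> 0" if "x \<ge> 0" for x
    using pos[OF that] by simp
  have cont_inv: "continuous_on {0..} (\<lambda>x. 1 / \<rho> x)"
    by (intro continuous_on_divide cont) (simp_all add: \<rho>_ne)
  have cont_P: "continuous_on {0..} P"
    unfolding P_def by (rule continuous_on_integral_from_0[OF cont])
  have P_nonneg: "P x \<ge> 0" if "x \<ge> 0" for x
    using integral_from_0_mono[OF cont, of 0 x] pos that by (force simp: P_def)
  have cont_P_inv: "continuous_on {0..} (\<lambda>x. P x / \<rho> x)"
    by (intro continuous_on_divide cont cont_P) (simp add: \<rho>_ne)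
  interpret end_barriers \<rho> H P G
  proof
    show "(H has_real_derivative 1 / \<rho> s) (at s)"
      and "(P has_real_derivative \<rho> s) (at s)"
      and "(G has_real_derivative P s / \<rho> s) (at s)" if "s > 0" for s
      using DERIV_integral_from_0[OF cont_inv that] DERIV_integral_from_0[OF cont that]
        DERIV_integral_from_0[OF cont_P_inv that]
      by (simp_all only: H_def P_def G_def)
    show "H s \<le> H r" if "0 \<le> s" "s \<le> r" for s r
      unfolding H_def by (rule integral_from_0_mono[OF cont_inv _ that]) (simp add: pos less_imp_le)
    show "G s \<le> G r" if "0 \<le> s" "s \<le> r" for s r
      unfolding G_def by (rule integral_from_0_mono[OF cont_P_inv _ that])
        (simp add: pos P_nonneg less_imp_le)
  qed (auto simp: pos diff H_def G_def intro: continuous_on_integral_from_0 cont_inv cont_P_inv)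
  show ?thesis
    unfolding parabolic_end_def
  proof (intro allI impI)
    fix u v :: "real \<Rightarrow> real \<Rightarrow> real" and s t :: real
    assume "bounded_harmonic_on_end \<rho> u" "bounded_harmonic_on_end \<rho> v"
      and "\<forall>t. u 0 t = v 0 t" and "0 \<le> s"
    then show "u s t = v s t"
      using bounded_harmonic_le_if_boundary_le[OF unbounded[folded H_def]]
      by (metis order.antisym order.refl)
  qed
qed

lemma ln_growth_le_integral:
  fixes f f' b :: "real \<Rightarrow> real"
  assumes f': "\<And>s. s \<ge> 0 \<Longrightarrow> (f has_real_derivative f' s) (at s within {0..})"
    and pos: "\<And>s. s \<ge> 0 \<Longrightarrow> f s > 0"
    and le: "\<And>s. s \<ge> 0 \<Longrightarrow> f' s \<le> b s"
    and cont_b: "continuous_on {0..} b"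
    and "s \<ge> 0"
  shows "ln (f s) - ln (f 0) \<le> integral {0..s} (\<lambda>x. b x / f x)"
proof -
  have cont_f: "continuous_on {0..} f"
    using f' by (intro DERIV_continuous_on) auto
  have f_ne: "f x \<noteq> 0" if "x \<ge> 0" for x
    using pos[OF that] by simp
  have cont_bf: "continuous_on {0..} (\<lambda>x. b x / f x)"
    by (intro continuous_on_divide cont_b cont_f) (simp add: f_ne)
  define \<phi> where "\<phi> = (\<lambda>x. ln (f x) - integral {0..x} (\<lambda>x. b x / f x))"
  have "\<phi> s \<le> \<phi> 0"
  proof (rule DERIV_nonpos_imp_decreasing_open[OF \<open>s \<ge> 0\<close>])
    show "continuous_on {0..s} \<phi>"
      unfolding \<phi>_def
      by (intro continuous_on_diff continuous_on_ln continuous_on_subset[OF cont_f]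
          continuous_on_subset[OF continuous_on_integral_from_0[OF cont_bf]]) (auto simp: f_ne)
    fix x assume "0 < x" "x < s"
    have "(f has_real_derivative f' x) (at x)"
      using f'[of x] \<open>0 < x\<close> at_within_interior[of x "{0..}"] by simp
    then have "(\<phi> has_real_derivative f' x / f x - b x / f x) (at x)"
      unfolding \<phi>_def using pos[of x] \<open>0 < x\<close>
      by (auto intro!: derivative_eq_intros DERIV_integral_from_0[OF cont_bf] simp: field_simps)
    moreover have "f' x / f x - b x / f x \<le> 0"
      using le[of x] pos[of x] \<open>0 < x\<close> by (simp add: divide_right_mono)
    ultimately show "\<exists>y. (\<phi> has_real_derivative y) (at x) \<and> y \<le> 0" by blast
  qed
  then show ?thesis by (simp add: \<phi>_def)
qed

lemma bdd_above_if_bdd_above_integral_log_derivative_bound: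
  fixes f f' b :: "real \<Rightarrow> real"
  assumes f': "\<And>s. s \<ge> 0 \<Longrightarrow> (f has_real_derivative f' s) (at s within {0..})"
    and pos: "\<And>s. s \<ge> 0 \<Longrightarrow> f s > 0"
    and le: "\<And>s. s \<ge> 0 \<Longrightarrow> f' s \<le> b s"
    and cont_b: "continuous_on {0..} b"
    and bdd: "bdd_above ((\<lambda>s. integral {0..s} (\<lambda>x. b x / f x)) ` {0..})"
  shows "bdd_above (f ` {0..})"
proof -
  obtain B where B: "\<And>s. s \<ge> 0 \<Longrightarrow> integral {0..s} (\<lambda>x. b x / f x) \<le> B"
    using bdd by (auto simp: bdd_above_def)
  have "ln (f s) \<le> ln (f 0) + B" if "s \<ge> 0" for s
    using ln_growth_le_integral[OF f' pos le cont_b that] B[OF that] by simp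
  then have "f s \<le> exp (ln (f 0) + B)" if "s \<ge> 0" for s
    using pos that by (metis exp_le_cancel_iff exp_ln)
  then show ?thesis by (auto simp: bdd_above_def)
qed

lemma arclength_component_le:
  fixes a c d :: real
  assumes "(a\<^sup>2 + c\<^sup>2) / d\<^sup>2 = 1" and "d > 0"
  shows "a \<le> d"
proof -
  have "a\<^sup>2 + c\<^sup>2 = d\<^sup>2" using assms by (simp add: divide_eq_eq)
  then have "a\<^sup>2 \<le> d\<^sup>2" using zero_le_power2[of c] by linarith
  then show ?thesis using \<open>d > 0\<close> by (auto intro: power2_le_imp_le)
qed

theorem proposition5p1:
  fixes \<gamma>1 \<gamma>2 \<gamma>1' \<gamma>2' :: "real \<Rightarrow> real"
  assumes d1: "\<forall>s\<ge>0. (\<gamma>1 has_real_derivative \<gamma>1' s) (at s within {0..})"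
      and d2: "\<forall>s\<ge>0. (\<gamma>2 has_real_derivative \<gamma>2' s) (at s within {0..})"
      and c1: "continuous_on {0..} \<gamma>1'"
      and c2: "continuous_on {0..} \<gamma>2'"
      and pos1: "\<forall>s\<ge>0. \<gamma>1 s > 0"
      and pos2: "\<forall>s\<ge>0. \<gamma>2 s > 0"
      and arclen: "\<forall>s\<ge>0. ((\<gamma>1' s)^2 + (\<gamma>2' s)^2) / (\<gamma>2 s)^2 = 1"
      and nonpar: "\<not> parabolic_end (\<lambda>s. \<gamma>1 s / \<gamma>2 s)"
  shows "bdd_above (\<gamma>1 ` {0..})"
proof -
  have \<gamma>2_ne: "\<gamma>2 s \<noteq> 0" if "s \<ge> 0" for s
    using pos2 that by force
  have cont1: "continuous_on {0..} \<gamma>1" and cont2: "continuous_on {0..} \<gamma>2"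
    using d1 d2 by (auto intro: DERIV_continuous_on)
  have \<rho>_pos: "\<gamma>1 s / \<gamma>2 s > 0" if "s \<ge> 0" for s
    using pos1 pos2 that by simp
  have \<rho>_cont: "continuous_on {0..} (\<lambda>s. \<gamma>1 s / \<gamma>2 s)"
    by (intro continuous_on_divide cont1 cont2) (simp add: \<gamma>2_ne)
  have \<rho>_diff: "(\<lambda>s. \<gamma>1 s / \<gamma>2 s) differentiable (at s)" if "s > 0" for s
    using d1[rule_format, of s] d2[rule_format, of s] \<gamma>2_ne[of s] that
      at_within_interior[of s "{0..}"]
    by (auto intro!: DERIV_divide simp: real_differentiable_def)
  have "bdd_above ((\<lambda>s. integral {0..s} (\<lambda>x. 1 / (\<gamma>1 x / \<gamma>2 x))) ` {0..})"
  proof (rule ccontr)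
    assume "\<not> ?thesis"
    then have "parabolic_end (\<lambda>s. \<gamma>1 s / \<gamma>2 s)"
      by (intro parabolic_end_if_unbounded_integral_inverse \<rho>_pos \<rho>_cont \<rho>_diff)
    with nonpar show False by contradiction
  qed
  moreover have "\<gamma>1' s \<le> \<gamma>2 s" if "s \<ge> 0" for s
    using arclength_component_le[of "\<gamma>1' s" "\<gamma>2' s" "\<gamma>2 s"] arclen pos2 that by blast
  ultimately show ?thesis
    using bdd_above_if_bdd_above_integral_log_derivative_bound[OF d1[rule_format] pos1[rule_format] _ cont2]
    by simp
qed

end
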